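(* Let $\Lambda,\mu,\beta,\rho,\phi,\alpha,\omega>0$, $0<\eta_C\le 1$, $\eta_A\ge 1$, and set $\beta_1=\beta\mu/\Lambda$, $\xi_1=\alpha+\mu$, $\xi_2=\omega+\mu$, $\xi_3=\rho+\phi+\mu$. Consider the system \begin{align*} \dot S&=\Lambda-\beta_1(I+\eta_C C+\eta_A A)S-\mu S,\\ \dot I&=\beta_1(I+\eta_C C+\eta_A A)S-\xi_3 I+\alpha A+\omega C,\\ \dot C&=\phi I-\xi_2 C,\\ \dot A&=\rho I-\xi_1 A, \end{align*} on the region $\Omega=\{(S,I,C,A)\in\mathbb{R}_+^4: S+I+C+A\le \Lambda/\mu\}$, and let $\Omega_0=\{(S,I,C,A)\in\Omega: I=C=A=0\}$. Define $$\tilde R_0=\frac{\beta\,\bigl(\xi_2(\xi_1+\rho\eta_A)+\eta_C\phi\xi_1\bigr)}{\mu\,\bigl(\xi_2(\rho+\xi_1)+\phi\xi_1\bigr)}.$$ If $\tilde R_0>1$, then the endemic equilibrium $\tilde\Sigma_+=(S^*,I^*,C^*,A^* )$ of this system, given by $$S^*=\frac{\Lambda}{\mu\tilde R_0},\quad I^*=\frac{\Lambda\xi_1\xi_2(1-1/\tilde R_0)}{\mathcal D},\quad C^*=\frac{\Lambda\phi\xi_1(1-1/\tilde R_0)}{\mathcal D},\quad A^*=\frac{\Lambda\rho\xi_2(1-1/\tilde R_0)}{\mathcal D},$$ with $\mathcal D=\mu(\xi_2(\rho+\xi_1)+\phi\xi_1)$, is globally asymptotically stable in $\Omega\setminus\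Omega_0$.
   Context: This is the limiting (mass-action) form of an HIV/AIDS model with susceptible ($S$), pre-AIDS HIV-infected ($I$), HIV-infected under antiretroviral treatment ($C$) and AIDS ($A$) classes, with zero AIDS-induced death rate and total population fixed at $\Lambda/\mu$. $\tilde R_0$ is the basic reproduction number of this model; $\tilde\Sigma_+$ is its unique equilibrium with $I,C,A>0$ when $\tilde R_0>1$. *)

theory Defs
  imports "HOL-Analysis.Analysis"
begin

type_synonym state = "real \<times> real \<times> real \<times> real"  (* (S, I, C, A) *)

definition hiv_field ::
  "real \<Rightarrow> real \<Rightarrow> real \<Rightarrow> real \<Rightarrow> real \<Rightarrow> real \<Rightarrow> real \<Rightarrow> real \<Rightarrow> real \<Rightarrow> state \<Rightarrow> state" where
  "hiv_field \<Lambda> \<mu> \<beta> \<rho> \<phi> \<alpha> \<omega> \<eta>C \<eta>A = (\<lambda>(S, I, C, A).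
     let \<beta>1 = \<beta> * \<mu> / \<Lambda>; \<xi>1 = \<alpha> + \<mu>; \<xi>2 = \<omega> + \<mu>; \<xi>3 = \<rho> + \<phi> + \<mu> in
     (\<Lambda> - \<beta>1 * (I + \<eta>C * C + \<eta>A * A) * S - \<mu> * S,
      \<beta>1 * (I + \<eta>C * C + \<eta>A * A) * S - \<xi>3 * I + \<alpha> * A + \<omega> * C,
      \<phi> * I - \<xi>2 * C,
      \<rho> * I - \<xi>1 * A))"

definition Omega :: "real \<Rightarrow> real \<Rightarrow> state set" where
  "Omega \<Lambda> \<mu> = {(S, I, C, A). 0 \<le> S \<and> 0 \<le> I \<and> 0 \<le> C \<and> 0 \<le> A \<and> S + I + C + A \<le> \<Lambda> / \<mu>}"

definition Omega0 :: "real \<Rightarrow> real \<Rightarrow> state set" where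
  "Omega0 \<Lambda> \<mu> = {(S, I, C, A). (S, I, C, A) \<in> Omega \<Lambda> \<mu> \<and> I = 0 \<and> C = 0 \<and> A = 0}"

definition R0t ::
  "real \<Rightarrow> real \<Rightarrow> real \<Rightarrow> real \<Rightarrow> real \<Rightarrow> real \<Rightarrow> real \<Rightarrow> real \<Rightarrow> real \<Rightarrow> real" where
  "R0t \<Lambda> \<mu> \<beta> \<rho> \<phi> \<alpha> \<omega> \<eta>C \<eta>A =
     (let \<xi>1 = \<alpha> + \<mu>; \<xi>2 = \<omega> + \<mu> in
      \<beta> * (\<xi>2 * (\<xi>1 + \<rho> * \<eta>A) + \<eta>C * \<phi> * \<xi>1) / (\<mu> * (\<xi>2 * (\<rho> + \<xi>1) + \<phi> * \<xi>1)))"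

definition endemic_eq ::
  "real \<Rightarrow> real \<Rightarrow> real \<Rightarrow> real \<Rightarrow> real \<Rightarrow> real \<Rightarrow> real \<Rightarrow> real \<Rightarrow> real \<Rightarrow> state" where
  "endemic_eq \<Lambda> \<mu> \<beta> \<rho> \<phi> \<alpha> \<omega> \<eta>C \<eta>A =
     (let R = R0t \<Lambda> \<mu> \<beta> \<rho> \<phi> \<alpha> \<omega> \<eta>C \<eta>A; \<xi>1 = \<alpha> + \<mu>; \<xi>2 = \<omega> + \<mu>;
          D = \<mu> * (\<xi>2 * (\<rho> + \<xi>1) + \<phi> * \<xi>1) in
      (\<Lambda> / (\<mu> * R),
       \<Lambda> * \<xi>1 * \<xi>2 * (1 - 1 / R) / D,
       \<Lambda> * \<phi> * \<xi>1 * (1 - 1 / R) / D,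
       \<Lambda> * \<rho> * \<xi>2 * (1 - 1 / R) / D))"

definition is_solution :: "(state \<Rightarrow> state) \<Rightarrow> (real \<Rightarrow> state) \<Rightarrow> bool" where
  "is_solution F x \<longleftrightarrow> (\<forall>t\<ge>0. (x has_vector_derivative F (x t)) (at t within {0..}))"

definition globally_asymptotically_stable ::
  "(state \<Rightarrow> state) \<Rightarrow> state \<Rightarrow> state set \<Rightarrow> bool" where
  "globally_asymptotically_stable F E D \<longleftrightarrow>
     (\<forall>\<epsilon>>0. \<exists>\<delta>>0. \<forall>x. is_solution F x \<and> x 0 \<in> D \<and> dist (x 0) E < \<delta> \<longrightarrow>
                         (\<forall>t\<ge>0. dist (x t) E < \<epsilon>)) \<and>
     (\<forall>x. is_solution F x \<and> x 0 \<in> D \<longrightarrow> (x \<longlongrightarrow> E) at_top)"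

end

(*
  With g u = u - 1 - ln u consider, on the open positive orthant,
    U = Se g(S/Se) + Ie g(I/Ie) + kC Ce g(C/Ce) + kA Ae g(A/Ae) + (S + I + C + A - \<Lambda>/\<mu>)^2.
  Its orbital derivative is at most -W, where W collects a term \<mu>(S - Se)^2/S, two terms forcing
  I/Ie = C/Ce = A/Ae, and 2\<mu>(S + I + C + A - \<Lambda>/\<mu>)^2 (the remaining cyclic terms are
  nonpositive by AM-GM). The squared population term is what makes W vanish only at the endemic
  equilibrium: the Volterra part alone leaves the common ratio I/Ie free. Since U is small exactly near
  the equilibrium, the equilibrium is stable. Solutions starting in Omega - Omega0 stay nonnegative and
  are positive for t > 0; from time 1 on they remain in a compact box of positive states, where W has a
  positive minimum off any ball around the equilibrium, so U would become negative unless the solution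
  enters every such ball; stability then gives convergence.
*)

theory Submission
  imports Defs
begin

lemma three_le_sum_if_prod_eq_one:
  fixes p q r :: real
  assumes "p > 0" "q > 0" "r > 0" "p * q * r = 1"
  shows "3 \<le> p + q + r"
proof -
  have "ln p + ln q + ln r = 0"
    using assms ln_mult[of "p * q" r] ln_mult[of p q] by simp
  moreover have "ln p \<le> p - 1" "ln q \<le> q - 1" "ln r \<le> r - 1"
    using assms by (auto intro: ln_le_minus_one)
  ultimately show ?thesis by linarith
qed

lemma mult_ge_neg_bound:
  fixes x y a b X Y :: real
  assumes "-a \<le> x" "x \<le> X" "-b \<le> y" "y \<le> Y" "0 \<le> a" "0 \<le> b" "0 \<le> X" "0 \<le> Y"
  shows "- (a * Y + b * X) \<le> x * y"
proof -
  consider "0 \<le> x" "0 \<le> y" | "x < 0" "y < 0" | "0 \<le> x" "y < 0" | "x < 0" "0 \<le> y" by linarith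
  then show ?thesis
  proof cases
    case 3
    have "x * (-b) \<le> x * y" using 3 assms by (intro mult_left_mono) auto
    then have "- (b * x) \<le> x * y" by (simp add: mult.commute)
    moreover have "b * x \<le> b * X" using assms by (intro mult_left_mono) auto
    moreover have "0 \<le> a * Y" using assms by simp
    ultimately show ?thesis by linarith
  next
    case 4
    have "(-a) * y \<le> x * y" using 4 assms by (intro mult_right_mono) auto
    then have "- (a * y) \<le> x * y" by simp
    moreover have "a * y \<le> a * Y" using assms by (intro mult_left_mono) auto
    moreover have "0 \<le> b * X" using assms by simp
    ultimately show ?thesis by linarith
  qed (use assms in \<open>smt (verit) mult_nonneg_nonneg mult_nonpos_nonpos\<close>)+
qed

lemma nonneg_if_gt_neg_epsilon:
  fixes y k c :: real
  assumes "0 < c" "0 < k" "\<And>e. 0 < e \<Longrightarrow> e \<le> c \<Longrightarrow> - (e * k) < y"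
  shows "0 \<le> y"
proof (rule ccontr)
  assume "\<not> 0 \<le> y"
  then have "- (min c (- y / (2 * k)) * k) < y"
    using assms by (intro assms(3)) (auto simp: field_simps)
  moreover have "min c (- y / (2 * k)) * k \<le> - y / (2 * k) * k"
    using assms by (intro mult_right_mono) auto
  ultimately show False using \<open>\<not> 0 \<le> y\<close> \<open>0 < k\<close> by (simp add: field_simps)
qed

lemma positive_by_barrier:
  fixes q :: "'k \<Rightarrow> real \<Rightarrow> real"
  assumes "finite K"
    and cont: "\<And>k. k \<in> K \<Longrightarrow> continuous_on {0..T} (q k)"
    and init: "\<And>k. k \<in> K \<Longrightarrow> 0 < q k 0"
    and barrier: "\<And>k t. k \<in> K \<Longrightarrow> 0 < t \<Longrightarrow> t \<le> T \<Longrightarrow> (\<And>j. j \<in> K \<Longrightarrow> 0 \<le> q j t) \<Longrightarrow>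
                    q k t = 0 \<Longrightarrow> \<exists>l>0. (q k has_real_derivative l) (at t)"
    and "k \<in> K" "t \<in> {0..T}"
  shows "0 < q k t"
proof (rule ccontr)
  define Z where "Z = (\<Union>j\<in>K. {0..T} \<inter> q j -` {..0})"
  assume "\<not> 0 < q k t"
  then have "t \<in> Z" using assms(5,6) unfolding Z_def by (auto simp: not_less)
  then have Z: "Z \<noteq> {}" "bdd_below Z" unfolding Z_def by (blast, auto intro: bdd_belowI[of _ 0])
  have "closed Z"
    unfolding Z_def using assms(1) by (intro closed_UN) (auto intro: continuous_closed_preimage[OF cont])
  then have "Inf Z \<in> Z" using Z by (rule closed_contains_Inf[rotated -1])
  then obtain k' where k': "k' \<in> K" "Inf Z \<in> {0..T}" "q k' (Inf Z) \<le> 0" unfolding Z_def by auto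
  have before: "0 < q j u" if "j \<in> K" "0 \<le> u" "u < Inf Z" for j u
  proof (rule ccontr)
    assume "\<not> 0 < q j u"
    then have "u \<in> Z" using that k'(2) unfolding Z_def by (auto simp: not_less)
    then show False using cInf_lower[OF _ Z(2)] that(3) by fastforce
  qed
  have pos: "0 < Inf Z" using k' init[of k'] by (cases "Inf Z = 0") auto
  have "0 \<le> q j (Inf Z)" if "j \<in> K" for j
  proof (rule tendsto_lowerbound)
    have "continuous_on {0..Inf Z} (q j)" using k'(2) by (intro continuous_on_subset[OF cont[OF that]]) auto
    then show "(q j \<longlongrightarrow> q j (Inf Z)) (at_left (Inf Z))"
      using pos by (simp add: continuous_on_Icc_at_leftD)
    show "\<forall>\<^sub>F u in at_left (Inf Z). 0 \<le> q j u"
      using eventually_at_left_real[OF pos] by eventually_elim (auto intro: less_imp_le before[OF that])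
  qed simp
  then obtain l where l: "0 < l" "(q k' has_real_derivative l) (at (Inf Z))"
    using barrier[OF k'(1) pos] k' by force
  obtain d where d: "0 < d" "\<And>h. 0 < h \<Longrightarrow> h < d \<Longrightarrow> q k' (Inf Z - h) < q k' (Inf Z)"
    using DERIV_pos_inc_left[OF l(2,1)] by blast
  have "q k' (Inf Z - min (d / 2) (Inf Z / 2)) < q k' (Inf Z)"
    using d pos by (intro d(2)) auto
  moreover have "0 < q k' (Inf Z - min (d / 2) (Inf Z / 2))"
    using d pos k'(1) by (intro before) auto
  ultimately show False using k'(3) by linarith
qed

lemma exp_weighted_deriv:
  assumes "(y has_real_derivative y') (at u)"
  shows "((\<lambda>u. y u * exp (k * u)) has_real_derivative (y' + k * y u) * exp (k * u)) (at u)"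
  using assms by (auto intro!: derivative_eq_intros simp: algebra_simps)

lemma pos_if_deriv_plus_linear_nonneg:
  fixes y y' :: "real \<Rightarrow> real"
  assumes der: "\<And>u. 0 < u \<Longrightarrow> u < t \<Longrightarrow> (y has_real_derivative y' u) (at u)"
    and cont: "continuous_on {0..t} y"
    and rate: "\<And>u. 0 < u \<Longrightarrow> u < t \<Longrightarrow> 0 \<le> y' u + k * y u"
    and "0 < y 0" "0 \<le> t"
  shows "0 < y t"
proof -
  have "y 0 * exp (k * 0) \<le> y t * exp (k * t)"
  proof (rule DERIV_nonneg_imp_increasing_open[OF \<open>0 \<le> t\<close>])
    fix u assume "0 < u" "u < t"
    then show "\<exists>z. ((\<lambda>u. y u * exp (k * u)) has_real_derivative z) (at u) \<and> 0 \<le> z"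
      using exp_weighted_deriv[OF der] rate by (metis exp_ge_zero mult_nonneg_nonneg)
  qed (use cont in \<open>intro continuous_intros\<close>)
  then show ?thesis using \<open>0 < y 0\<close> zero_less_mult_pos2[of "y t" "exp (k * t)"] by simp
qed

lemma pos_if_deriv_plus_linear_pos:
  fixes y y' :: "real \<Rightarrow> real"
  assumes der: "\<And>u. 0 < u \<Longrightarrow> u < t \<Longrightarrow> (y has_real_derivative y' u) (at u)"
    and cont: "continuous_on {0..t} y"
    and rate: "\<And>u. 0 < u \<Longrightarrow> u < t \<Longrightarrow> 0 < y' u + k * y u"
    and "0 \<le> y 0" "0 < t"
  shows "0 < y t"
proof -
  have "y 0 * exp (k * 0) < y t * exp (k * t)"
  proof (rule DERIV_pos_imp_increasing_open[OF \<open>0 < t\<close>])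
    fix u assume "0 < u" "u < t"
    then show "\<exists>z. ((\<lambda>u. y u * exp (k * u)) has_real_derivative z) (at u) \<and> 0 < z"
      using exp_weighted_deriv[OF der] rate by (metis exp_gt_zero mult_pos_pos)
  qed (use cont in \<open>intro continuous_intros\<close>)
  then show ?thesis using \<open>0 \<le> y 0\<close> zero_less_mult_pos2[of "y t" "exp (k * t)"] by simp
qed

lemma dist_tuple4_le:
  fixes a1 a2 a3 a4 b1 b2 b3 b4 :: real
  shows "dist (a1, a2, a3, a4) (b1, b2, b3, b4) \<le> \<bar>a1 - b1\<bar> + \<bar>a2 - b2\<bar> + \<bar>a3 - b3\<bar> + \<bar>a4 - b4\<bar>"
proof -
  have pair: "dist (x, y) (x', y') \<le> dist x x' + dist y y'" for x x' :: real and y y' :: "'a :: metric_space"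
    unfolding dist_Pair_Pair by (rule sqrt_sum_squares_le_sum) auto
  have "dist (a1, a2, a3, a4) (b1, b2, b3, b4) \<le> dist a1 b1 + dist (a2, a3, a4) (b2, b3, b4)" by (rule pair)
  also have "dist (a2, a3, a4) (b2, b3, b4) \<le> dist a2 b2 + dist (a3, a4) (b3, b4)" by (rule pair)
  also have "dist (a3, a4) (b3, b4) \<le> dist a3 b3 + dist a4 b4" by (rule pair)
  finally show ?thesis by (simp add: dist_real_def add.assoc)
qed

section \<open>The Volterra function\<close>

definition volterra :: "real \<Rightarrow> real" where
  "volterra u = u - 1 - ln u"

lemma volterra_one [simp]: "volterra 1 = 0"
  by (simp add: volterra_def)

lemma volterra_nonneg: "0 < u \<Longrightarrow> 0 \<le> volterra u"
  unfolding volterra_def using ln_le_minus_one[of u] by simp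

lemma exp_le_if_volterra_le:
  assumes "0 < u" "volterra u \<le> k"
  shows "exp (-1 - k) \<le> u"
proof -
  have "-1 - k \<le> ln u" using assms unfolding volterra_def by linarith
  then show ?thesis using assms(1) by (metis exp_le_cancel_iff exp_ln)
qed

lemma volterra_small_imp_near_one:
  assumes "0 < e"
  shows "\<exists>\<delta>>0. \<forall>u>0. volterra u < \<delta> \<longrightarrow> \<bar>u - 1\<bar> < e"
proof (intro exI conjI allI impI)
  define r where "r = min 1 (e / 3)"
  show "0 < r\<^sup>2" using assms unfolding r_def by simp
  fix u :: real assume u: "0 < u" "volterra u < r\<^sup>2"
  have "ln u = 2 * ln (sqrt u)" using u(1) by (simp add: ln_sqrt)
  moreover have "ln (sqrt u) \<le> sqrt u - 1" using u(1) by (intro ln_le_minus_one) simp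
  moreover have "(sqrt u - 1)\<^sup>2 = u - 2 * sqrt u + 1" using u(1) by (simp add: power2_diff)
  ultimately have "\<bar>sqrt u - 1\<bar>\<^sup>2 < r\<^sup>2" using u(2) unfolding volterra_def by simp
  then have lt: "\<bar>sqrt u - 1\<bar> < r" by (rule power2_less_imp_less) (simp add: r_def assms less_imp_le)
  have "u - 1 = (sqrt u - 1) * (sqrt u + 1)"
    using u(1) by (simp add: algebra_simps)
  moreover have "0 \<le> sqrt u + 1" using u(1) by simp
  ultimately have "\<bar>u - 1\<bar> = \<bar>sqrt u - 1\<bar> * (sqrt u + 1)"
    by (simp add: abs_mult)
  also have "\<dots> \<le> \<bar>sqrt u - 1\<bar> * 3" using lt unfolding r_def by (intro mult_left_mono) auto
  also have "\<dots> < e" using lt unfolding r_def by simp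
  finally show "\<bar>u - 1\<bar> < e" .
qed

lemma scaled_volterra_small_imp_near:
  assumes "0 < X" "0 < k" "0 < e"
  shows "\<exists>\<delta>>0. \<forall>Y>0. k * (X * volterra (Y / X)) < \<delta> \<longrightarrow> \<bar>Y - X\<bar> < e"
proof -
  obtain \<delta> where \<delta>: "0 < \<delta>" "\<forall>u>0. volterra u < \<delta> \<longrightarrow> \<bar>u - 1\<bar> < e / X"
    using volterra_small_imp_near_one[of "e / X"] assms by auto
  show ?thesis
  proof (intro exI[of _ "k * (X * \<delta>)"] conjI allI impI)
    show "0 < k * (X * \<delta>)" using assms \<delta> by simp
    fix Y :: real assume "0 < Y" "k * (X * volterra (Y / X)) < k * (X * \<delta>)"
    then have "\<bar>Y / X - 1\<bar> < e / X" using \<delta>(2) assms by simp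
    then have "X * \<bar>Y / X - 1\<bar> < e" using assms by (simp add: field_simps)
    moreover have "Y - X = X * (Y / X - 1)" using assms by (simp add: field_simps)
    ultimately show "\<bar>Y - X\<bar> < e" using assms by (simp add: abs_mult)
  qed
qed

lemma has_real_derivative_scaled_volterra:
  assumes "(y has_real_derivative y') (at t)" "0 < y t" "0 < X"
  shows "((\<lambda>t. X * volterra (y t / X)) has_real_derivative (1 - X / y t) * y') (at t)"
proof -
  have "((\<lambda>t. X * (y t / X - 1 - ln (y t / X))) has_real_derivative
          X * (y' / X - 0 - (y' / X) / (y t / X))) (at t)"
    using assms by (auto intro!: derivative_eq_intros)
  moreover have "X * (y' / X - 0 - (y' / X) / (y t / X)) = (1 - X / y t) * y'"
    using assms(2,3) by (simp add: field_simps)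
  ultimately show ?thesis unfolding volterra_def by simp
qed

lemma cyclic_amgm3:
  fixes x y z :: real
  assumes "0 < x" "0 < y" "0 < z"
  shows "3 \<le> 1 / x + x * z / y + y / z"
  using assms by (intro three_le_sum_if_prod_eq_one) (auto simp: field_simps)

text \<open>The orbital derivative of the Volterra part of the Lyapunov function, rewritten with the
  equilibrium relations so that every term has a visible sign.\<close>
lemma volterra_rate_identity:
  fixes S I C A Se Ie Ce Ae b1 eC eA al om mu phi rho xi1 xi2 xi3 Lam Fe :: real
  assumes pos: "0 < S" "0 < I" "0 < C" "0 < A" "0 < Se" "0 < Ie" "0 < Ce" "0 < Ae" "0 < xi1" "0 < xi2"
    and Fe: "Fe = Ie + eC * Ce + eA * Ae"
    and bal: "Lam = b1 * Se * Fe + mu * Se" "xi3 * Ie = b1 * Se * Fe + al * Ae + om * Ce"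
      "phi * Ie = xi2 * Ce" "rho * Ie = xi1 * Ae"
  shows "(1 - Se / S) * (Lam - b1 * (I + eC * C + eA * A) * S - mu * S)
       + (1 - Ie / I) * (b1 * (I + eC * C + eA * A) * S - xi3 * I + al * A + om * C)
       + (b1 * Se * eC + om) / xi2 * ((1 - Ce / C) * (phi * I - xi2 * C))
       + (b1 * Se * eA + al) / xi1 * ((1 - Ae / A) * (rho * I - xi1 * A))
     = - mu * (S - Se)\<^sup>2 / S - b1 * Se * Ie * (1 - S / Se)\<^sup>2 / (S / Se)
       + b1 * Se * eC * Ce * (3 - Se / S - (S / Se) * (C / Ce) / (I / Ie) - (I / Ie) / (C / Ce))
       + om * Ce * (2 - (C / Ce) / (I / Ie) - (I / Ie) / (C / Ce))
       + b1 * Se * eA * Ae * (3 - Se / S - (S / Se) * (A / Ae) / (I / Ie) - (I / Ie) / (A / Ae))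
       + al * Ae * (2 - (A / Ae) / (I / Ie) - (I / Ie) / (A / Ae))"
proof -
  have sub: "phi = xi2 * Ce / Ie" "rho = xi1 * Ae / Ie" "xi3 = (b1 * Se * Fe + al * Ae + om * Ce) / Ie"
    using bal pos by (simp_all add: field_simps)
  show ?thesis unfolding sub bal(1) Fe using pos
    by (simp add: field_simps) (simp add: algebra_simps power2_eq_square)
qed

section \<open>The endemic equilibrium and the Lyapunov function\<close>

locale hiv_model =
  fixes \<Lambda> \<mu> \<beta> \<rho> \<phi> \<alpha> \<omega> \<eta>C \<eta>A :: real
  assumes pos: "0 < \<Lambda>" "0 < \<mu>" "0 < \<beta>" "0 < \<rho>" "0 < \<phi>" "0 < \<alpha>" "0 < \<omega>" "0 < \<eta>C" "0 < \<eta>A"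
    and R0_gt_1: "1 < R0t \<Lambda> \<mu> \<beta> \<rho> \<phi> \<alpha> \<omega> \<eta>C \<eta>A"
begin

definition "b1 = \<beta> * \<mu> / \<Lambda>"
definition "xi1 = \<alpha> + \<mu>"
definition "xi2 = \<omega> + \<mu>"
definition "xi3 = \<rho> + \<phi> + \<mu>"

definition "Se = fst (endemic_eq \<Lambda> \<mu> \<beta> \<rho> \<phi> \<alpha> \<omega> \<eta>C \<eta>A)"
definition "Ie = fst (snd (endemic_eq \<Lambda> \<mu> \<beta> \<rho> \<phi> \<alpha> \<omega> \<eta>C \<eta>A))"
definition "Ce = fst (snd (snd (endemic_eq \<Lambda> \<mu> \<beta> \<rho> \<phi> \<alpha> \<omega> \<eta>C \<eta>A)))"
definition "Ae = snd (snd (snd (endemic_eq \<Lambda> \<mu> \<beta> \<rho> \<phi> \<alpha> \<omega> \<eta>C \<eta>A)))"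
definition "Fe = Ie + \<eta>C * Ce + \<eta>A * Ae"

lemma endemic_eq_components: "endemic_eq \<Lambda> \<mu> \<beta> \<rho> \<phi> \<alpha> \<omega> \<eta>C \<eta>A = (Se, Ie, Ce, Ae)"
  by (simp add: Se_def Ie_def Ce_def Ae_def)

lemma rates_pos: "0 < b1" "0 < xi1" "0 < xi2" "0 < xi3"
  using pos by (auto simp: xi1_def xi2_def xi3_def b1_def)

lemma endemic_pos: "0 < Se" "0 < Ie" "0 < Ce" "0 < Ae"
  and endemic_balance:
    "\<Lambda> = b1 * Se * Fe + \<mu> * Se"
    "xi3 * Ie = b1 * Se * Fe + \<alpha> * Ae + \<omega> * Ce"
    "\<phi> * Ie = xi2 * Ce" "\<rho> * Ie = xi1 * Ae"
    "\<Lambda> / \<mu> = Se + Ie + Ce + Ae"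
proof -
  define R where "R = R0t \<Lambda> \<mu> \<beta> \<rho> \<phi> \<alpha> \<omega> \<eta>C \<eta>A"
  define N where "N = xi2 * (xi1 + \<rho> * \<eta>A) + \<eta>C * \<phi> * xi1"
  define D where "D = xi2 * (\<rho> + xi1) + \<phi> * xi1"
  define k where "k = \<Lambda> * (1 - 1 / R) / (\<mu> * D)"
  have R: "R = \<beta> * N / (\<mu> * D)"
    unfolding R_def R0t_def N_def D_def xi1_def xi2_def Let_def by simp
  have "1 < R" using R0_gt_1 R_def by simp
  have "0 < N" "0 < D" unfolding N_def D_def using pos rates_pos by (simp_all add: add_pos_pos)
  then have "0 < k" unfolding k_def using pos \<open>1 < R\<close> by (simp add: field_simps)
  have S: "Se = \<Lambda> / (\<mu> * R)" and I: "Ie = k * xi1 * xi2" and C: "Ce = k * \<phi> * xi1"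
    and A: "Ae = k * \<rho> * xi2"
    unfolding Se_def Ie_def Ce_def Ae_def endemic_eq_def k_def D_def R_def xi1_def xi2_def Let_def
    using R0_gt_1 by (simp_all add: field_simps)
  show "0 < Se" "0 < Ie" "0 < Ce" "0 < Ae"
    using S I C A \<open>0 < k\<close> pos rates_pos \<open>1 < R\<close> by auto
  have bS: "b1 * Se = \<mu> * D / N"
    unfolding S b1_def R using pos \<open>0 < N\<close> \<open>0 < D\<close> by (simp add: field_simps)
  have "Fe = k * N" unfolding Fe_def I C A N_def by (simp add: algebra_simps)
  then have bSF: "b1 * Se * Fe = \<mu> * D * k" unfolding bS using \<open>0 < N\<close> by simp
  have kD: "\<mu> * D * k = \<Lambda> - \<Lambda> / R" unfolding k_def using \<open>0 < D\<close> pos by (simp add: field_simps)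
  have muS: "\<mu> * Se = \<Lambda> / R" unfolding S using pos by simp
  show "\<Lambda> = b1 * Se * Fe + \<mu> * Se" unfolding bSF kD muS by simp
  show "xi3 * Ie = b1 * Se * Fe + \<alpha> * Ae + \<omega> * Ce"
    unfolding bSF I A C xi3_def D_def xi1_def xi2_def by (simp add: algebra_simps)
  show "\<phi> * Ie = xi2 * Ce" "\<rho> * Ie = xi1 * Ae" unfolding I C A by (simp_all add: algebra_simps)
  have "\<mu> * (Ie + Ce + Ae) = \<mu> * D * k" unfolding I C A D_def by (simp add: algebra_simps)
  then show "\<Lambda> / \<mu> = Se + Ie + Ce + Ae" using kD muS pos by (simp add: field_simps)
qed

definition "kC = (b1 * Se * \<eta>C + \<omega>) / xi2"
definition "kA = (b1 * Se * \<eta>A + \<alpha>) / xi1"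

lemma weights_pos: "0 < kC" "0 < kA"
  unfolding kC_def kA_def using rates_pos endemic_pos pos
  by (auto intro!: divide_pos_pos add_nonneg_pos mult_nonneg_nonneg simp: less_imp_le)

definition lyap :: "real \<Rightarrow> real \<Rightarrow> real \<Rightarrow> real \<Rightarrow> real" where
  "lyap S I C A = Se * volterra (S / Se) + Ie * volterra (I / Ie) + kC * (Ce * volterra (C / Ce))
     + kA * (Ae * volterra (A / Ae)) + (S + I + C + A - \<Lambda> / \<mu>)\<^sup>2"

definition lyap_rate :: "real \<Rightarrow> real \<Rightarrow> real \<Rightarrow> real \<Rightarrow> real" where
  "lyap_rate S I C A =
     (1 - Se / S) * (\<Lambda> - b1 * (I + \<eta>C * C + \<eta>A * A) * S - \<mu> * S)
     + (1 - Ie / I) * (b1 * (I + \<eta>C * C + \<eta>A * A) * S - xi3 * I + \<alpha> * A + \<omega> * C)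
     + kC * ((1 - Ce / C) * (\<phi> * I - xi2 * C)) + kA * ((1 - Ae / A) * (\<rho> * I - xi1 * A))
     + 2 * (S + I + C + A - \<Lambda> / \<mu>) * (\<Lambda> - \<mu> * (S + I + C + A))"

definition dissipation :: "real \<Rightarrow> real \<Rightarrow> real \<Rightarrow> real \<Rightarrow> real" where
  "dissipation S I C A = \<mu> * (S - Se)\<^sup>2 / S + \<omega> * Ce * ((C / Ce - I / Ie)\<^sup>2 / (I / Ie * (C / Ce)))
     + \<alpha> * Ae * ((A / Ae - I / Ie)\<^sup>2 / (I / Ie * (A / Ae))) + 2 * \<mu> * (S + I + C + A - \<Lambda> / \<mu>)\<^sup>2"

lemma lyap_rate_le:
  assumes "0 < S" "0 < I" "0 < C" "0 < A"
  shows "lyap_rate S I C A \<le> - dissipation S I C A"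
proof -
  note E = endemic_pos
  have am: "3 - Se / S - (S / Se) * (X / Xe) / (I / Ie) - (I / Ie) / (X / Xe) \<le> 0"
    if "0 < X" "0 < Xe" for X Xe
    using cyclic_amgm3[of "S / Se" "I / Ie" "X / Xe"] assms E that by simp
  have sq: "2 - (X / Xe) / (I / Ie) - (I / Ie) / (X / Xe) = - ((X / Xe - I / Ie)\<^sup>2 / (I / Ie * (X / Xe)))"
    if "0 < X" "0 < Xe" for X Xe
    using assms E that by (simp add: field_simps power2_eq_square)
  have "b1 * Se * \<eta>C * Ce * (3 - Se / S - (S / Se) * (C / Ce) / (I / Ie) - (I / Ie) / (C / Ce)) \<le> 0"
    "b1 * Se * \<eta>A * Ae * (3 - Se / S - (S / Se) * (A / Ae) / (I / Ie) - (I / Ie) / (A / Ae)) \<le> 0"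
    using am[of C Ce] am[of A Ae] assms E rates_pos pos by (simp_all add: mult_nonneg_nonpos)
  moreover have "0 \<le> b1 * Se * Ie * (1 - S / Se)\<^sup>2 / (S / Se)" using assms E rates_pos by simp
  moreover have "2 * (S + I + C + A - \<Lambda> / \<mu>) * (\<Lambda> - \<mu> * (S + I + C + A))
      = - (2 * \<mu> * (S + I + C + A - \<Lambda> / \<mu>)\<^sup>2)"
    using pos by (simp add: field_simps power2_eq_square)
  ultimately show ?thesis
    unfolding lyap_rate_def dissipation_def kC_def kA_def
      volterra_rate_identity[OF assms E rates_pos(2,3) Fe_def endemic_balance(1-4)]
      sq[OF assms(3) E(3)] sq[OF assms(4) E(4)]
    by linarith
qed

lemma dissipation_nonneg:
  assumes "0 < S" "0 < I" "0 < C" "0 < A"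
  shows "0 \<le> dissipation S I C A"
  using assms endemic_pos pos unfolding dissipation_def by simp

lemma dissipation_pos:
  assumes "0 < S" "0 < I" "0 < C" "0 < A" and "(S, I, C, A) \<noteq> (Se, Ie, Ce, Ae)"
  shows "0 < dissipation S I C A"
proof (rule ccontr)
  note E = endemic_pos
  assume "\<not> 0 < dissipation S I C A"
  moreover have "0 \<le> \<mu> * (S - Se)\<^sup>2 / S" "0 \<le> \<omega> * Ce * ((C / Ce - I / Ie)\<^sup>2 / (I / Ie * (C / Ce)))"
    "0 \<le> \<alpha> * Ae * ((A / Ae - I / Ie)\<^sup>2 / (I / Ie * (A / Ae)))" "0 \<le> 2 * \<mu> * (S + I + C + A - \<Lambda> / \<mu>)\<^sup>2"
    using assms E pos by simp_all
  ultimately have "\<mu> * (S - Se)\<^sup>2 / S = 0" "\<omega> * Ce * ((C / Ce - I / Ie)\<^sup>2 / (I / Ie * (C / Ce))) = 0"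
    "\<alpha> * Ae * ((A / Ae - I / Ie)\<^sup>2 / (I / Ie * (A / Ae))) = 0" "2 * \<mu> * (S + I + C + A - \<Lambda> / \<mu>)\<^sup>2 = 0"
    unfolding dissipation_def by linarith+
  then have "S = Se" "C / Ce = I / Ie" "A / Ae = I / Ie" "S + I + C + A = \<Lambda> / \<mu>"
    using assms E pos by simp_all
  then have eqs: "S = Se" "C = I / Ie * Ce" "A = I / Ie * Ae" "I + C + A = Ie + Ce + Ae"
    using E endemic_balance(5) by (simp_all add: field_simps)
  then have "I / Ie * (Ie + Ce + Ae) = 1 * (Ie + Ce + Ae)" using E by (simp add: algebra_simps)
  then have "I / Ie = 1" using E by (subst (asm) mult_right_cancel) auto
  then have "I = Ie" using E by simp
  then show False using assms(5) eqs E by simp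
qed

lemma lyap_ge_terms:
  assumes "0 < S" "0 < I" "0 < C" "0 < A"
  shows "Se * volterra (S / Se) \<le> lyap S I C A" "Ie * volterra (I / Ie) \<le> lyap S I C A"
    "kC * (Ce * volterra (C / Ce)) \<le> lyap S I C A" "kA * (Ae * volterra (A / Ae)) \<le> lyap S I C A"
    "0 \<le> lyap S I C A"
proof -
  have "0 \<le> Se * volterra (S / Se)" "0 \<le> Ie * volterra (I / Ie)"
    "0 \<le> kC * (Ce * volterra (C / Ce))" "0 \<le> kA * (Ae * volterra (A / Ae))"
    using volterra_nonneg assms endemic_pos weights_pos by simp_all
  then show "Se * volterra (S / Se) \<le> lyap S I C A" "Ie * volterra (I / Ie) \<le> lyap S I C A"
    "kC * (Ce * volterra (C / Ce)) \<le> lyap S I C A" "kA * (Ae * volterra (A / Ae)) \<le> lyap S I C A"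
    "0 \<le> lyap S I C A"
    unfolding lyap_def by (smt (verit) zero_le_power2)+
qed

lemma lyap_small_imp_near:
  assumes "0 < e"
  shows "\<exists>\<eta>>0. \<forall>S I C A. 0 < S \<and> 0 < I \<and> 0 < C \<and> 0 < A \<and> lyap S I C A < \<eta> \<longrightarrow>
            dist (S, I, C, A) (Se, Ie, Ce, Ae) < e"
proof -
  obtain h1 where h1: "0 < h1" "\<forall>Y>0. 1 * (Se * volterra (Y / Se)) < h1 \<longrightarrow> \<bar>Y - Se\<bar> < e / 4"
    using scaled_volterra_small_imp_near[of Se 1 "e / 4"] endemic_pos assms by auto
  obtain h2 where h2: "0 < h2" "\<forall>Y>0. 1 * (Ie * volterra (Y / Ie)) < h2 \<longrightarrow> \<bar>Y - Ie\<bar> < e / 4"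
    using scaled_volterra_small_imp_near[of Ie 1 "e / 4"] endemic_pos assms by auto
  obtain h3 where h3: "0 < h3" "\<forall>Y>0. kC * (Ce * volterra (Y / Ce)) < h3 \<longrightarrow> \<bar>Y - Ce\<bar> < e / 4"
    using scaled_volterra_small_imp_near[of Ce kC "e / 4"] endemic_pos weights_pos assms by auto
  obtain h4 where h4: "0 < h4" "\<forall>Y>0. kA * (Ae * volterra (Y / Ae)) < h4 \<longrightarrow> \<bar>Y - Ae\<bar> < e / 4"
    using scaled_volterra_small_imp_near[of Ae kA "e / 4"] endemic_pos weights_pos assms by auto
  show ?thesis
  proof (intro exI[of _ "Min {h1, h2, h3, h4}"] conjI allI impI)
    show "0 < Min {h1, h2, h3, h4}" using h1 h2 h3 h4 by simp
    fix S I C A assume H: "0 < S \<and> 0 < I \<and> 0 < C \<and> 0 < A \<and> lyap S I C A < Min {h1, h2, h3, h4}"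
    then have P: "0 < S" "0 < I" "0 < C" "0 < A" and "lyap S I C A < Min {h1, h2, h3, h4}" by auto
    then have "lyap S I C A < h1" "lyap S I C A < h2" "lyap S I C A < h3" "lyap S I C A < h4" by auto
    then have "\<bar>S - Se\<bar> < e / 4" "\<bar>I - Ie\<bar> < e / 4" "\<bar>C - Ce\<bar> < e / 4" "\<bar>A - Ae\<bar> < e / 4"
      using h1(2) h2(2) h3(2) h4(2) lyap_ge_terms[OF P] P by (smt (verit))+
    then show "dist (S, I, C, A) (Se, Ie, Ce, Ae) < e" using dist_tuple4_le[of S I C A Se Ie Ce Ae] by linarith
  qed
qed

lemma near_imp_lyap_small:
  assumes "0 < \<eta>"
  shows "\<exists>\<delta>>0. \<forall>S I C A. dist (S, I, C, A) (Se, Ie, Ce, Ae) < \<delta> \<longrightarrow>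
            0 < S \<and> 0 < I \<and> 0 < C \<and> 0 < A \<and> lyap S I C A < \<eta>"
proof -
  define U where "U p = lyap (fst p) (fst (snd p)) (fst (snd (snd p))) (snd (snd (snd p)))" for p :: state
  have "U (Se, Ie, Ce, Ae) = 0" unfolding U_def lyap_def using endemic_pos endemic_balance(5) by simp
  moreover have "isCont U (Se, Ie, Ce, Ae)"
    unfolding U_def lyap_def volterra_def using endemic_pos by (intro continuous_intros) auto
  ultimately obtain d where d: "0 < d" "\<And>p. dist p (Se, Ie, Ce, Ae) < d \<Longrightarrow> \<bar>U p\<bar> < \<eta>"
    unfolding continuous_at_eps_delta dist_real_def using assms by force
  show ?thesis
  proof (intro exI[of _ "Min {d, Se, Ie, Ce, Ae}"] conjI allI impI)
    show "0 < Min {d, Se, Ie, Ce, Ae}" using d endemic_pos by simp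
    fix S I C A assume H: "dist (S, I, C, A) (Se, Ie, Ce, Ae) < Min {d, Se, Ie, Ce, Ae}"
    have "dist S Se \<le> dist (S, I, C, A) (Se, Ie, Ce, Ae)" "dist I Ie \<le> dist (S, I, C, A) (Se, Ie, Ce, Ae)"
      "dist C Ce \<le> dist (S, I, C, A) (Se, Ie, Ce, Ae)" "dist A Ae \<le> dist (S, I, C, A) (Se, Ie, Ce, Ae)"
      using dist_fst_le[of "(S, I, C, A)" "(Se, Ie, Ce, Ae)"] dist_snd_le[of "(S, I, C, A)" "(Se, Ie, Ce, Ae)"]
        dist_fst_le[of "(I, C, A)" "(Ie, Ce, Ae)"] dist_snd_le[of "(I, C, A)" "(Ie, Ce, Ae)"]
        dist_fst_le[of "(C, A)" "(Ce, Ae)"] dist_snd_le[of "(C, A)" "(Ce, Ae)"] by simp_all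
    then show "0 < S" "0 < I" "0 < C" "0 < A" using H unfolding dist_real_def by auto
    show "lyap S I C A < \<eta>" using d(2)[of "(S, I, C, A)"] H unfolding U_def by simp
  qed
qed

lemma lyap_le_imp_lower_bounds:
  assumes "0 < S" "0 < I" "0 < C" "0 < A" "lyap S I C A \<le> v"
  shows "Se * exp (-1 - v / Se) \<le> S" "Ie * exp (-1 - v / Ie) \<le> I"
    "Ce * exp (-1 - v / (kC * Ce)) \<le> C" "Ae * exp (-1 - v / (kA * Ae)) \<le> A"
proof -
  have bound: "X * exp (-1 - v / (k * X)) \<le> Y" if "0 < Y" "0 < X" "0 < k" "k * (X * volterra (Y / X)) \<le> v"
    for X Y k
  proof -
    have "volterra (Y / X) \<le> v / (k * X)" using that by (simp add: field_simps)
    then have "exp (-1 - v / (k * X)) \<le> Y / X" using that by (intro exp_le_if_volterra_le) auto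
    then show ?thesis using that by (simp add: field_simps)
  qed
  note T = lyap_ge_terms[OF assms(1-4)]
  show "Se * exp (-1 - v / Se) \<le> S" "Ie * exp (-1 - v / Ie) \<le> I"
    using bound[of S Se 1] bound[of I Ie 1] T assms endemic_pos by simp_all
  show "Ce * exp (-1 - v / (kC * Ce)) \<le> C" "Ae * exp (-1 - v / (kA * Ae)) \<le> A"
    using bound[of C Ce kC] bound[of A Ae kA] T assms endemic_pos weights_pos by simp_all
qed

text \<open>Bounds the components of states with population at most \<open>\<Lambda> / \<mu>\<close> whose
  components are all at least \<open>-1\<close>.\<close>
definition "load_cap = (1 + \<eta>C + \<eta>A) * (\<Lambda> / \<mu> + 3)"

definition "barrier_rate = 2 * b1 * (1 + \<eta>C + \<eta>A) * load_cap + \<alpha> + \<omega> + \<phi> + \<rho> + 1"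

lemma load_cap_ge_1: "1 \<le> load_cap"
proof -
  have "1 * 1 \<le> (1 + \<eta>C + \<eta>A) * (\<Lambda> / \<mu> + 3)" using pos by (intro mult_mono) auto
  then show ?thesis unfolding load_cap_def by simp
qed

lemma barrier_rate_pos: "0 < barrier_rate"
  unfolding barrier_rate_def using pos rates_pos load_cap_ge_1 by (simp add: add_pos_pos)

lemma near_orthant_bounds:
  fixes S I C A d :: real
  assumes d: "0 < d" "d \<le> 1"
    and low: "-d \<le> S" "-d \<le> I" "-d \<le> C" "-d \<le> A"
    and pop: "S + I + C + A \<le> \<Lambda> / \<mu>"
  shows "- ((1 + \<eta>C + \<eta>A) * d) \<le> I + \<eta>C * C + \<eta>A * A"
    and "I + \<eta>C * C + \<eta>A * A \<le> load_cap"
    and "S \<le> load_cap"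
proof -
  have up: "S \<le> \<Lambda> / \<mu> + 3" "I \<le> \<Lambda> / \<mu> + 3" "C \<le> \<Lambda> / \<mu> + 3" "A \<le> \<Lambda> / \<mu> + 3"
    using low pop d by linarith+
  have "\<eta>C * (-d) \<le> \<eta>C * C" "\<eta>A * (-d) \<le> \<eta>A * A"
    using mult_left_mono[OF low(3), of \<eta>C] mult_left_mono[OF low(4), of \<eta>A] pos by auto
  then show "- ((1 + \<eta>C + \<eta>A) * d) \<le> I + \<eta>C * C + \<eta>A * A"
    using low by (simp add: algebra_simps)
  have "\<eta>C * C \<le> \<eta>C * (\<Lambda> / \<mu> + 3)" "\<eta>A * A \<le> \<eta>A * (\<Lambda> / \<mu> + 3)"
    using up pos by (auto intro!: mult_left_mono)
  then have "I + \<eta>C * C + \<eta>A * A \<le> (\<Lambda> / \<mu> + 3) + \<eta>C * (\<Lambda> / \<mu> + 3) + \<eta>A * (\<Lambda> / \<mu> + 3)"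
    using up by linarith
  also have "\<dots> = load_cap" unfolding load_cap_def by (simp only: distrib_right mult_1)
  finally show "I + \<eta>C * C + \<eta>A * A \<le> load_cap" .
  have "1 * (\<Lambda> / \<mu> + 3) \<le> load_cap"
    unfolding load_cap_def using pos by (intro mult_right_mono) auto
  then have "\<Lambda> / \<mu> + 3 \<le> load_cap" by simp
  then show "S \<le> load_cap" using up by linarith
qed

lemma near_orthant_infection_bounds:
  fixes S I C A d :: real
  assumes d: "0 < d" "d \<le> 1"
    and low: "-d \<le> S" "-d \<le> I" "-d \<le> C" "-d \<le> A"
    and pop: "S + I + C + A \<le> \<Lambda> / \<mu>"
  defines "F \<equiv> I + \<eta>C * C + \<eta>A * A" and "G \<equiv> 1 + \<eta>C + \<eta>A"
  shows "- (2 * G * load_cap * d) \<le> F * S"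
    and "S = -d \<Longrightarrow> F * S \<le> 2 * G * load_cap * d"
proof -
  note bounds = near_orthant_bounds[OF assms(1-7), folded F_def G_def]
  have "1 \<le> G" unfolding G_def using pos by simp
  have "- (G * d * load_cap + d * load_cap) \<le> F * S"
    using bounds low(1) d load_cap_ge_1 \<open>1 \<le> G\<close> by (intro mult_ge_neg_bound) auto
  moreover have "d * load_cap \<le> G * d * load_cap"
    using \<open>1 \<le> G\<close> load_cap_ge_1 d by (simp add: mult_right_mono)
  ultimately show "- (2 * G * load_cap * d) \<le> F * S" by (simp add: algebra_simps)
  assume "S = -d"
  have "- (G * d) * d \<le> F * d" using bounds(1) d by (intro mult_right_mono) auto
  moreover have "G * d * d \<le> G * d * load_cap"
    using d load_cap_ge_1 \<open>1 \<le> G\<close> by (intro mult_left_mono) auto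
  moreover have "G * d * load_cap \<le> 2 * G * load_cap * d"
    using d load_cap_ge_1 \<open>1 \<le> G\<close> by simp
  ultimately show "F * S \<le> 2 * G * load_cap * d" using \<open>S = -d\<close> by (auto simp: algebra_simps)
qed

lemma field_escapes_barrier:
  fixes S I C A d :: real
  assumes d: "0 < d" "d \<le> 1"
    and low: "-d \<le> S" "-d \<le> I" "-d \<le> C" "-d \<le> A"
    and pop: "S + I + C + A \<le> \<Lambda> / \<mu>"
  defines "F \<equiv> I + \<eta>C * C + \<eta>A * A"
  shows "S = -d \<Longrightarrow> 0 < (\<Lambda> - b1 * F * S - \<mu> * S) + d * barrier_rate"
    and "I = -d \<Longrightarrow> 0 < (b1 * F * S - xi3 * I + \<alpha> * A + \<omega> * C) + d * barrier_rate"
    and "C = -d \<Longrightarrow> 0 < (\<phi> * I - xi2 * C) + d * barrier_rate"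
    and "A = -d \<Longrightarrow> 0 < (\<rho> * I - xi1 * A) + d * barrier_rate"
proof -
  define k where "k = 2 * (1 + \<eta>C + \<eta>A) * load_cap * d"
  have FS: "- k \<le> F * S" "S = -d \<Longrightarrow> F * S \<le> k"
    using near_orthant_infection_bounds[OF assms(1-7)] unfolding k_def F_def by auto
  have "b1 * (- k) \<le> b1 * (F * S)" "S = -d \<Longrightarrow> b1 * (F * S) \<le> b1 * k"
    using mult_left_mono[OF FS(1)] mult_left_mono[OF FS(2)] rates_pos by auto
  then have b1FS: "- (b1 * k) \<le> b1 * F * S" "S = -d \<Longrightarrow> b1 * F * S \<le> b1 * k"
    by (simp_all add: mult.assoc)
  have rate: "d * barrier_rate = b1 * k + \<alpha> * d + \<omega> * d + \<phi> * d + \<rho> * d + d"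
    unfolding barrier_rate_def k_def by (simp add: algebra_simps)
  have "\<alpha> * (-d) \<le> \<alpha> * A" "\<omega> * (-d) \<le> \<omega> * C" "\<phi> * (-d) \<le> \<phi> * I" "\<rho> * (-d) \<le> \<rho> * I"
    using mult_left_mono[OF low(4), of \<alpha>] mult_left_mono[OF low(3), of \<omega>]
      mult_left_mono[OF low(2), of \<phi>] mult_left_mono[OF low(2), of \<rho>] pos by auto
  moreover have "0 < \<alpha> * d" "0 < \<omega> * d" "0 < \<phi> * d" "0 < \<rho> * d" "0 < \<mu> * d"
    "0 < xi1 * d" "0 < xi2 * d" "0 < xi3 * d" "0 \<le> b1 * k"
    using pos rates_pos d load_cap_ge_1 unfolding k_def by simp_all
  ultimately show "S = -d \<Longrightarrow> 0 < (\<Lambda> - b1 * F * S - \<mu> * S) + d * barrier_rate"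
    and "I = -d \<Longrightarrow> 0 < (b1 * F * S - xi3 * I + \<alpha> * A + \<omega> * C) + d * barrier_rate"
    and "C = -d \<Longrightarrow> 0 < (\<phi> * I - xi2 * C) + d * barrier_rate"
    and "A = -d \<Longrightarrow> 0 < (\<rho> * I - xi1 * A) + d * barrier_rate"
    using b1FS rate pos d by (simp_all only: mult_minus_right; linarith)+
qed

end

section \<open>Solutions\<close>

locale hiv_solution = hiv_model +
  fixes x :: "real \<Rightarrow> state"
  assumes solution: "is_solution (hiv_field \<Lambda> \<mu> \<beta> \<rho> \<phi> \<alpha> \<omega> \<eta>C \<eta>A) x"
    and initial: "x 0 \<in> Omega \<Lambda> \<mu> - Omega0 \<Lambda> \<mu>"
begin

definition "s t = fst (x t)"
definition "i t = fst (snd (x t))"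
definition "c t = fst (snd (snd (x t)))"
definition "a t = snd (snd (snd (x t)))"
definition "F t = i t + \<eta>C * c t + \<eta>A * a t"

lemma x_eq: "x t = (s t, i t, c t, a t)"
  by (simp add: s_def i_def c_def a_def)

lemma initial_state:
  shows "0 \<le> s 0" "0 \<le> i 0" "0 \<le> c 0" "0 \<le> a 0" "s 0 + i 0 + c 0 + a 0 \<le> \<Lambda> / \<mu>"
    and "0 < i 0 \<or> 0 < c 0 \<or> 0 < a 0"
  using initial unfolding x_eq[of 0] Omega0_def Omega_def by auto

lemma has_derivative_components:
  assumes "0 < t"
  shows "(s has_real_derivative \<Lambda> - b1 * F t * s t - \<mu> * s t) (at t)"
    and "(i has_real_derivative b1 * F t * s t - xi3 * i t + \<alpha> * a t + \<omega> * c t) (at t)"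
    and "(c has_real_derivative \<phi> * i t - xi2 * c t) (at t)"
    and "(a has_real_derivative \<rho> * i t - xi1 * a t) (at t)"
proof -
  have "at t within {0..} = at t" using assms by (intro at_within_interior) auto
  then have "(x has_vector_derivative hiv_field \<Lambda> \<mu> \<beta> \<rho> \<phi> \<alpha> \<omega> \<eta>C \<eta>A (x t)) (at t)"
    using solution assms unfolding is_solution_def by (metis less_imp_le)
  then have "(x has_vector_derivative
      (\<Lambda> - b1 * F t * s t - \<mu> * s t, b1 * F t * s t - xi3 * i t + \<alpha> * a t + \<omega> * c t,
       \<phi> * i t - xi2 * c t, \<rho> * i t - xi1 * a t)) (at t)"
    unfolding x_eq[of t] hiv_field_def F_def b1_def xi1_def xi2_def xi3_def Let_def by simp
  note fst = bounded_linear.has_vector_derivative[OF bounded_linear_fst this]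
    and snd = bounded_linear.has_vector_derivative[OF bounded_linear_snd this]
  note fst2 = bounded_linear.has_vector_derivative[OF bounded_linear_fst snd]
    and snd2 = bounded_linear.has_vector_derivative[OF bounded_linear_snd snd]
  note fst3 = bounded_linear.has_vector_derivative[OF bounded_linear_fst snd2]
    and snd3 = bounded_linear.has_vector_derivative[OF bounded_linear_snd snd2]
  show "(s has_real_derivative \<Lambda> - b1 * F t * s t - \<mu> * s t) (at t)"
    "(i has_real_derivative b1 * F t * s t - xi3 * i t + \<alpha> * a t + \<omega> * c t) (at t)"
    "(c has_real_derivative \<phi> * i t - xi2 * c t) (at t)"
    "(a has_real_derivative \<rho> * i t - xi1 * a t) (at t)"
    using fst fst2 fst3 snd3 unfolding has_real_derivative_iff_has_vector_derivative
    by (simp_all add: s_def[abs_def] i_def[abs_def] c_def[abs_def] a_def[abs_def] o_def)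
qed

lemma continuous_on_components:
  "continuous_on {0..t} s" "continuous_on {0..t} i" "continuous_on {0..t} c" "continuous_on {0..t} a"
proof -
  have "continuous_on {0..} x"
    using solution unfolding is_solution_def by (intro continuous_on_vector_derivative) auto
  then have "continuous_on {0..t} x" by (rule continuous_on_subset) auto
  then show "continuous_on {0..t} s" "continuous_on {0..t} i" "continuous_on {0..t} c" "continuous_on {0..t} a"
    unfolding s_def i_def c_def a_def by (auto intro!: continuous_on_fst continuous_on_snd)
qed

lemma population_bound:
  assumes "0 \<le> t"
  shows "s t + i t + c t + a t \<le> \<Lambda> / \<mu>"
proof -
  define f where "f u = (s u + i u + c u + a u - \<Lambda> / \<mu>) * exp (\<mu> * u)" for u
  have "f t \<le> f 0"
  proof (rule DERIV_nonpos_imp_decreasing_open[OF assms])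
    fix u :: real assume "0 < u" "u < t"
    then have "(f has_real_derivative
        ((\<Lambda> - b1 * F u * s u - \<mu> * s u) + (b1 * F u * s u - xi3 * i u + \<alpha> * a u + \<omega> * c u)
          + (\<phi> * i u - xi2 * c u) + (\<rho> * i u - xi1 * a u)) * exp (\<mu> * u)
        + (s u + i u + c u + a u - \<Lambda> / \<mu>) * (exp (\<mu> * u) * \<mu>)) (at u)"
      unfolding f_def[abs_def] by (auto intro!: derivative_eq_intros has_derivative_components)
    moreover have "((\<Lambda> - b1 * F u * s u - \<mu> * s u) + (b1 * F u * s u - xi3 * i u + \<alpha> * a u + \<omega> * c u)
          + (\<phi> * i u - xi2 * c u) + (\<rho> * i u - xi1 * a u)) * exp (\<mu> * u)
        + (s u + i u + c u + a u - \<Lambda> / \<mu>) * (exp (\<mu> * u) * \<mu>) = 0"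
      using pos unfolding xi1_def xi2_def xi3_def by (simp add: field_simps)
    ultimately show "\<exists>y. (f has_real_derivative y) (at u) \<and> y \<le> 0" by auto
  next
    show "continuous_on {0..t} f"
      unfolding f_def using pos by (intro continuous_intros continuous_on_components) auto
  qed
  also have "f 0 \<le> 0" unfolding f_def using initial_state by simp
  finally show ?thesis unfolding f_def by (simp add: mult_le_0_iff)
qed

lemma field_escapes_barrier_along:
  assumes "y \<in> {s, i, c, a}" "0 < u" "0 < d" "d \<le> 1"
    and low: "\<And>j. j \<in> {s, i, c, a} \<Longrightarrow> -d \<le> j u" and "y u = -d"
  shows "\<exists>y'. (y has_real_derivative y') (at u) \<and> 0 < y' + d * barrier_rate"
proof -
  have "-d \<le> s u" "-d \<le> i u" "-d \<le> c u" "-d \<le> a u" using low by auto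
  from field_escapes_barrier[OF \<open>0 < d\<close> \<open>d \<le> 1\<close> this population_bound] assms(2)
  have "s u = -d \<Longrightarrow> 0 < (\<Lambda> - b1 * F u * s u - \<mu> * s u) + d * barrier_rate"
    "i u = -d \<Longrightarrow> 0 < (b1 * F u * s u - xi3 * i u + \<alpha> * a u + \<omega> * c u) + d * barrier_rate"
    "c u = -d \<Longrightarrow> 0 < (\<phi> * i u - xi2 * c u) + d * barrier_rate"
    "a u = -d \<Longrightarrow> 0 < (\<rho> * i u - xi1 * a u) + d * barrier_rate"
    unfolding F_def by simp_all
  then show ?thesis using assms(1,6) has_derivative_components[OF \<open>0 < u\<close>] by fastforce
qed

text \<open>Where a component first touches the barrier \<open>-e * exp (barrier_rate * t)\<close>, the field
  pushes it back up.\<close>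
lemma perturbed_components_pos:
  assumes "y \<in> {s, i, c, a}" "0 < e" "e \<le> exp (- (barrier_rate * t))" "0 \<le> t"
  shows "0 < y t + e * exp (barrier_rate * t)"
proof (rule positive_by_barrier[of "{s, i, c, a}" t "\<lambda>y u. y u + e * exp (barrier_rate * u)"])
  show "finite {s, i, c, a}" by simp
  show "continuous_on {0..t} (\<lambda>u. y u + e * exp (barrier_rate * u))" if "y \<in> {s, i, c, a}" for y
    using that continuous_on_components by (auto intro!: continuous_intros)
  show "0 < y 0 + e * exp (barrier_rate * 0)" if "y \<in> {s, i, c, a}" for y
    using that initial_state \<open>0 < e\<close> by auto
  show "y \<in> {s, i, c, a}" "t \<in> {0..t}" using assms by auto
next
  fix y u
  assume y: "y \<in> {s, i, c, a}" and u: "0 < u" "u \<le> t"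
    and low: "\<And>j. j \<in> {s, i, c, a} \<Longrightarrow> 0 \<le> j u + e * exp (barrier_rate * u)"
    and zero: "y u + e * exp (barrier_rate * u) = 0"
  define d where "d = e * exp (barrier_rate * u)"
  have "d \<le> exp (- (barrier_rate * t)) * exp (barrier_rate * u)"
    unfolding d_def using assms(3) by (intro mult_right_mono) auto
  also have "\<dots> \<le> 1"
    using u barrier_rate_pos by (simp add: mult_left_mono flip: exp_add)
  finally have "d \<le> 1" .
  moreover have "0 < d" unfolding d_def using \<open>0 < e\<close> by simp
  moreover have "-d \<le> j u" if "j \<in> {s, i, c, a}" for j using low[OF that] unfolding d_def by simp
  moreover have "y u = -d" using zero unfolding d_def by simp
  ultimately obtain y' where "(y has_real_derivative y') (at u)" "0 < y' + d * barrier_rate"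
    using field_escapes_barrier_along[OF y \<open>0 < u\<close>] by blast
  then show "\<exists>l>0. ((\<lambda>u. y u + e * exp (barrier_rate * u)) has_real_derivative l) (at u)"
    unfolding d_def by (auto intro!: derivative_eq_intros)
qed

lemma nonneg:
  assumes "0 \<le> t"
  shows "0 \<le> s t" "0 \<le> i t" "0 \<le> c t" "0 \<le> a t"
proof -
  have "0 \<le> y t" if "y \<in> {s, i, c, a}" for y
    using perturbed_components_pos[OF that _ _ assms]
    by (intro nonneg_if_gt_neg_epsilon[of "exp (- (barrier_rate * t))" "exp (barrier_rate * t)"]) force+
  then show "0 \<le> s t" "0 \<le> i t" "0 \<le> c t" "0 \<le> a t" by auto
qed

lemma load_bounds:
  assumes "0 \<le> t"
  shows "0 \<le> F t" "F t \<le> (1 + \<eta>C + \<eta>A) * (\<Lambda> / \<mu>)"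
proof -
  note nn = nonneg[OF assms]
  show "0 \<le> F t" unfolding F_def using nn pos by simp
  have "F t \<le> (1 + \<eta>C + \<eta>A) * (i t + c t + a t)"
    unfolding F_def using nn pos by (simp add: algebra_simps)
  also have "\<dots> \<le> (1 + \<eta>C + \<eta>A) * (\<Lambda> / \<mu>)"
    using population_bound[OF assms] nn pos by (intro mult_left_mono) auto
  finally show "F t \<le> (1 + \<eta>C + \<eta>A) * (\<Lambda> / \<mu>)" .
qed

lemma s_pos:
  assumes "0 < t"
  shows "0 < s t"
proof (rule pos_if_deriv_plus_linear_pos[OF has_derivative_components(1) continuous_on_components(1)
      _ initial_state(1) assms])
  let ?k = "b1 * ((1 + \<eta>C + \<eta>A) * (\<Lambda> / \<mu>)) + \<mu>"
  fix u assume u: "0 < u" "u < t"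
  have "b1 * F u \<le> b1 * ((1 + \<eta>C + \<eta>A) * (\<Lambda> / \<mu>))"
    using load_bounds u rates_pos by (intro mult_left_mono) auto
  then have "0 \<le> (?k - b1 * F u - \<mu>) * s u" using nonneg u by auto
  then show "0 < \<Lambda> - b1 * F u * s u - \<mu> * s u + ?k * s u" using pos by (simp add: algebra_simps)
qed auto

lemma c_a_persist:
  assumes "0 \<le> t"
  shows "0 < c 0 \<Longrightarrow> 0 < c t" and "0 < a 0 \<Longrightarrow> 0 < a t"
proof -
  show "0 < c 0 \<Longrightarrow> 0 < c t"
    by (rule pos_if_deriv_plus_linear_nonneg[OF has_derivative_components(3) continuous_on_components(3)
        _ _ assms, of xi2]) (use nonneg pos in auto)
  show "0 < a 0 \<Longrightarrow> 0 < a t"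
    by (rule pos_if_deriv_plus_linear_nonneg[OF has_derivative_components(4) continuous_on_components(4)
        _ _ assms, of xi1]) (use nonneg pos in auto)
qed

lemma i_pos:
  assumes "0 < t"
  shows "0 < i t"
proof -
  note rule_nonneg = pos_if_deriv_plus_linear_nonneg[OF has_derivative_components(2) continuous_on_components(2)]
    and rule_pos = pos_if_deriv_plus_linear_pos[OF has_derivative_components(2) continuous_on_components(2)]
  have rate: "0 \<le> b1 * F u * s u" "0 \<le> \<alpha> * a u" "0 \<le> \<omega> * c u" if "0 < u" for u
    using nonneg[of u] load_bounds[of u] that rates_pos pos by simp_all
  consider "0 < i 0" | "0 < c 0" | "0 < a 0" using initial_state(6) by blast
  then show ?thesis
  proof cases
    case 1
    then show ?thesis
      by (rule_tac rule_nonneg[where k = xi3]) (use rate assms in \<open>auto intro: add_nonneg_nonneg\<close>)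
  next
    case 2
    have "0 < \<omega> * c u" if "0 < u" for u using c_a_persist(1)[OF _ 2, of u] that pos by simp
    then show ?thesis
      by (rule_tac rule_pos[where k = xi3]) (use rate initial_state(2) assms in \<open>auto intro!: add_nonneg_pos\<close>)
  next
    case 3
    have "0 < \<alpha> * a u + \<omega> * c u" if "0 < u" for u
      using c_a_persist(2)[OF _ 3, of u] rate(3)[OF that] that pos by (simp add: add_pos_nonneg)
    then have "0 < b1 * F u * s u + (\<alpha> * a u + \<omega> * c u)" if "0 < u" for u
      using rate(1) that by (simp add: add_nonneg_pos)
    then show ?thesis
      by (rule_tac rule_pos[where k = xi3]) (use initial_state(2) assms in \<open>auto simp: algebra_simps\<close>)
  qed
qed

lemma positive:
  assumes "0 < t"
  shows "0 < s t" "0 < i t" "0 < c t" "0 < a t"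
proof -
  show "0 < s t" "0 < i t" using s_pos i_pos assms by auto
  show "0 < c t"
    by (rule pos_if_deriv_plus_linear_pos[OF has_derivative_components(3) continuous_on_components(3)
        _ initial_state(3) assms, of xi2]) (use i_pos pos in auto)
  show "0 < a t"
    by (rule pos_if_deriv_plus_linear_pos[OF has_derivative_components(4) continuous_on_components(4)
        _ initial_state(4) assms, of xi1]) (use i_pos pos in auto)
qed

definition "V t = lyap (s t) (i t) (c t) (a t)"

lemma has_derivative_V:
  assumes "0 < t"
  shows "(V has_real_derivative lyap_rate (s t) (i t) (c t) (a t)) (at t)"
proof -
  note d = has_derivative_components[OF assms] and p = positive[OF assms] and E = endemic_pos
  have "((\<lambda>u. s u + i u + c u + a u - \<Lambda> / \<mu>) has_real_derivative \<Lambda> - \<mu> * (s t + i t + c t + a t)) (at t)"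
    using d unfolding xi1_def xi2_def xi3_def
    by (auto intro!: derivative_eq_intros simp: algebra_simps)
  from DERIV_power[OF this, of 2]
  have "((\<lambda>u. (s u + i u + c u + a u - \<Lambda> / \<mu>)\<^sup>2) has_real_derivative
      2 * (s t + i t + c t + a t - \<Lambda> / \<mu>) * (\<Lambda> - \<mu> * (s t + i t + c t + a t))) (at t)"
    by (rule DERIV_cong) (simp add: algebra_simps)
  then show ?thesis
    unfolding V_def[abs_def] lyap_def lyap_rate_def
    by (intro DERIV_add DERIV_cmult has_real_derivative_scaled_volterra d[unfolded F_def] p E)
qed

lemma continuous_on_V:
  assumes "0 \<le> t0" "\<And>u. u \<in> {t0..t} \<Longrightarrow> 0 < s u \<and> 0 < i u \<and> 0 < c u \<and> 0 < a u"
  shows "continuous_on {t0..t} V"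
proof -
  have "continuous_on {t0..t} s" "continuous_on {t0..t} i" "continuous_on {t0..t} c" "continuous_on {t0..t} a"
    using continuous_on_components[of t] assms(1) by (auto elim!: continuous_on_subset)
  then show ?thesis
    unfolding V_def[abs_def] lyap_def volterra_def using endemic_pos
    by (intro continuous_intros) (auto dest!: assms(2))
qed

lemma V_decrease:
  assumes "0 \<le> t0" "t0 \<le> t" "0 < s t0" "0 < i t0" "0 < c t0" "0 < a t0"
    and W: "\<And>u. t0 < u \<Longrightarrow> u < t \<Longrightarrow> w \<le> dissipation (s u) (i u) (c u) (a u)"
  shows "V t + w * (t - t0) \<le> V t0"
proof -
  have p: "0 < s u \<and> 0 < i u \<and> 0 < c u \<and> 0 < a u" if "t0 \<le> u" for u
    using assms positive[of u] that by (cases "u = t0") auto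
  have "V t + w * t \<le> V t0 + w * t0"
  proof (rule DERIV_nonpos_imp_decreasing_open[OF assms(2), of "\<lambda>u. V u + w * u", simplified])
    fix u assume u: "t0 < u" "u < t"
    then have "((\<lambda>u. V u + w * u) has_real_derivative lyap_rate (s u) (i u) (c u) (a u) + w) (at u)"
      using assms(1) by (auto intro!: derivative_eq_intros has_derivative_V)
    moreover have "lyap_rate (s u) (i u) (c u) (a u) + w \<le> 0"
      using lyap_rate_le p[of u] W[OF u] u by fastforce
    ultimately show "\<exists>y. ((\<lambda>u. V u + w * u) has_real_derivative y) (at u) \<and> y \<le> 0" by blast
  next
    show "continuous_on {t0..t} (\<lambda>u. V u + w * u)"
      using p assms(1) by (intro continuous_intros continuous_on_V) auto
  qed
  then show ?thesis by (simp add: algebra_simps)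
qed

lemma V_antimono:
  assumes "0 \<le> t0" "t0 \<le> t" "0 < s t0" "0 < i t0" "0 < c t0" "0 < a t0"
  shows "V t \<le> V t0"
proof -
  have "0 \<le> dissipation (s u) (i u) (c u) (a u)" if "t0 < u" for u
    using positive[of u] that assms(1) by (intro dissipation_nonneg) auto
  then show ?thesis using V_decrease[OF assms, of 0] by simp
qed

lemma eventually_in_compact_positive:
  obtains B where "compact B" "\<And>S I C A. (S, I, C, A) \<in> B \<Longrightarrow> 0 < S \<and> 0 < I \<and> 0 < C \<and> 0 < A"
    "\<And>t. 1 \<le> t \<Longrightarrow> x t \<in> B"
proof -
  define lo where "lo X k = X * exp (-1 - V 1 / (k * X))" for X k
  define B where "B = {lo Se 1..\<Lambda> / \<mu>} \<times> {lo Ie 1..\<Lambda> / \<mu>} \<times> {lo Ce kC..\<Lambda> / \<mu>} \<times> {lo Ae kA..\<Lambda> / \<mu>}"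
  have lo_pos: "0 < lo X k" if "0 < X" for X k unfolding lo_def using that by simp
  show thesis
  proof (rule that[of B])
    show "compact B" unfolding B_def by (intro compact_Times compact_Icc)
    show "0 < S \<and> 0 < I \<and> 0 < C \<and> 0 < A" if "(S, I, C, A) \<in> B" for S I C A
    proof -
      have "lo Se 1 \<le> S" "lo Ie 1 \<le> I" "lo Ce kC \<le> C" "lo Ae kA \<le> A" using that unfolding B_def by auto
      then show ?thesis using lo_pos endemic_pos by (smt (verit))
    qed
    fix t :: real assume "1 \<le> t"
    then have p: "0 < s t" "0 < i t" "0 < c t" "0 < a t" using positive by auto
    have "lyap (s t) (i t) (c t) (a t) \<le> V 1"
      unfolding V_def[symmetric] using \<open>1 \<le> t\<close> positive[of 1] by (intro V_antimono) auto
    from lyap_le_imp_lower_bounds[OF p this]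
    have "lo Se 1 \<le> s t" "lo Ie 1 \<le> i t" "lo Ce kC \<le> c t" "lo Ae kA \<le> a t" unfolding lo_def by simp_all
    moreover have "s t \<le> \<Lambda> / \<mu>" "i t \<le> \<Lambda> / \<mu>" "c t \<le> \<Lambda> / \<mu>" "a t \<le> \<Lambda> / \<mu>"
      using population_bound[of t] \<open>1 \<le> t\<close> p by linarith+
    ultimately have "s t \<in> {lo Se 1..\<Lambda> / \<mu>}" "i t \<in> {lo Ie 1..\<Lambda> / \<mu>}" "c t \<in> {lo Ce kC..\<Lambda> / \<mu>}"
      "a t \<in> {lo Ae kA..\<Lambda> / \<mu>}" by simp_all
    then have "(s t, i t, c t, a t) \<in> B" unfolding B_def by (intro mem_Times_iff[THEN iffD2]) simp
    then show "x t \<in> B" by (simp only: x_eq)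
  qed
qed

lemma approaches_endemic:
  assumes "0 < d"
  shows "\<exists>T\<ge>1. dist (x T) (Se, Ie, Ce, Ae) < d"
proof (rule ccontr)
  assume far: "\<not> ?thesis"
  obtain B where B: "compact B" "\<And>S I C A. (S, I, C, A) \<in> B \<Longrightarrow> 0 < S \<and> 0 < I \<and> 0 < C \<and> 0 < A"
    "\<And>t. 1 \<le> t \<Longrightarrow> x t \<in> B"
    using eventually_in_compact_positive by blast
  define K where "K = B - ball (Se, Ie, Ce, Ae) d"
  define W where "W p = dissipation (fst p) (fst (snd p)) (fst (snd (snd p))) (snd (snd (snd p)))"
    for p :: state
  have K_pos: "0 < fst p \<and> 0 < fst (snd p) \<and> 0 < fst (snd (snd p)) \<and> 0 < snd (snd (snd p))"
    if "p \<in> K" for p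
    using that B(2)[of "fst p" "fst (snd p)" "fst (snd (snd p))" "snd (snd (snd p))"] unfolding K_def by auto
  have "compact K" unfolding K_def using B(1) by (intro compact_diff) auto
  moreover have inK: "x t \<in> K" if "1 \<le> t" for t
    using B(3)[OF that] far that unfolding K_def by (auto simp: dist_commute)
  moreover have "continuous_on K W"
    unfolding W_def[abs_def] dissipation_def using endemic_pos
    by (intro continuous_intros) (auto dest!: K_pos)
  ultimately obtain q where q: "q \<in> K" "\<And>p. p \<in> K \<Longrightarrow> W q \<le> W p"
    using continuous_attains_inf[of K W] by blast
  have "0 < W q"
    unfolding W_def using K_pos[OF q(1)] q(1) assms unfolding K_def
    by (intro dissipation_pos) auto
  define t where "t = 1 + (V 1 + 1) / W q"
  have "1 \<le> t" "0 \<le> V 1"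
    unfolding t_def V_def using \<open>0 < W q\<close> positive[of 1] lyap_ge_terms(5) by auto
  have W_x: "W (x u) = dissipation (s u) (i u) (c u) (a u)" for u
    unfolding W_def s_def i_def c_def a_def by simp
  have "V t + W q * (t - 1) \<le> V 1"
    using positive[of 1] \<open>1 \<le> t\<close> q(2)[OF inK] by (intro V_decrease) (auto simp flip: W_x)
  moreover have "0 \<le> V t" unfolding V_def using positive[of t] \<open>1 \<le> t\<close> lyap_ge_terms(5) by auto
  moreover have "W q * (t - 1) = V 1 + 1" unfolding t_def using \<open>0 < W q\<close> by simp
  ultimately show False by linarith
qed

end

context hiv_model
begin

lemma lyapunov_stable:
  assumes "0 < e"
  obtains \<delta> where "0 < \<delta>"
    "\<And>x t0 t. hiv_solution \<Lambda> \<mu> \<beta> \<rho> \<phi> \<alpha> \<omega> \<eta>C \<eta>A x \<Longrightarrow> 0 \<le> t0 \<Longrightarrow> t0 \<le> t \<Longrightarrow>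
       dist (x t0) (Se, Ie, Ce, Ae) < \<delta> \<Longrightarrow> dist (x t) (Se, Ie, Ce, Ae) < e"
proof -
  obtain \<eta> where \<eta>: "0 < \<eta>" "\<And>S I C A. 0 < S \<and> 0 < I \<and> 0 < C \<and> 0 < A \<and> lyap S I C A < \<eta> \<Longrightarrow>
      dist (S, I, C, A) (Se, Ie, Ce, Ae) < e"
    using lyap_small_imp_near[OF assms] by blast
  obtain \<delta> where \<delta>: "0 < \<delta>" "\<And>S I C A. dist (S, I, C, A) (Se, Ie, Ce, Ae) < \<delta> \<Longrightarrow>
      0 < S \<and> 0 < I \<and> 0 < C \<and> 0 < A \<and> lyap S I C A < \<eta>"
    using near_imp_lyap_small[OF \<eta>(1)] by blast
  show thesis
  proof (rule that[OF \<delta>(1)])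
    fix x t0 t
    assume x: "hiv_solution \<Lambda> \<mu> \<beta> \<rho> \<phi> \<alpha> \<omega> \<eta>C \<eta>A x"
      and t: "0 \<le> t0" "t0 \<le> t" and near: "dist (x t0) (Se, Ie, Ce, Ae) < \<delta>"
    interpret X: hiv_solution \<Lambda> \<mu> \<beta> \<rho> \<phi> \<alpha> \<omega> \<eta>C \<eta>A x by (rule x)
    have start: "0 < X.s t0" "0 < X.i t0" "0 < X.c t0" "0 < X.a t0" "X.V t0 < \<eta>"
      using \<delta>(2)[of "X.s t0" "X.i t0" "X.c t0" "X.a t0"] near unfolding X.V_def
      by (simp_all only: X.x_eq)
    have "0 < X.s t \<and> 0 < X.i t \<and> 0 < X.c t \<and> 0 < X.a t"
      using start X.positive[of t] t by (cases "t = t0") auto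
    moreover have "X.V t < \<eta>" using X.V_antimono[of t0 t] start t by simp
    ultimately show "dist (x t) (Se, Ie, Ce, Ae) < e"
      using \<eta>(2) unfolding X.V_def by (simp only: X.x_eq)
  qed
qed

lemma globally_asymptotically_stable:
  "globally_asymptotically_stable (hiv_field \<Lambda> \<mu> \<beta> \<rho> \<phi> \<alpha> \<omega> \<eta>C \<eta>A)
     (endemic_eq \<Lambda> \<mu> \<beta> \<rho> \<phi> \<alpha> \<omega> \<eta>C \<eta>A) (Omega \<Lambda> \<mu> - Omega0 \<Lambda> \<mu>)"
proof -
  have sol: "hiv_solution \<Lambda> \<mu> \<beta> \<rho> \<phi> \<alpha> \<omega> \<eta>C \<eta>A x"
    if "is_solution (hiv_field \<Lambda> \<mu> \<beta> \<rho> \<phi> \<alpha> \<omega> \<eta>C \<eta>A) x \<and> x 0 \<in> Omega \<Lambda> \<mu> - Omega0 \<Lambda> \<mu>" for x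
    using that hiv_model_axioms by (simp add: hiv_solution_def hiv_solution_axioms_def)
  show ?thesis
    unfolding globally_asymptotically_stable_def endemic_eq_components
  proof (intro conjI allI impI)
    fix e :: real assume "0 < e"
    then obtain \<delta> where \<delta>: "0 < \<delta>"
      "\<And>x t0 t. hiv_solution \<Lambda> \<mu> \<beta> \<rho> \<phi> \<alpha> \<omega> \<eta>C \<eta>A x \<Longrightarrow> 0 \<le> t0 \<Longrightarrow> t0 \<le> t \<Longrightarrow>
         dist (x t0) (Se, Ie, Ce, Ae) < \<delta> \<Longrightarrow> dist (x t) (Se, Ie, Ce, Ae) < e"
      using lyapunov_stable[OF \<open>0 < e\<close>] by metis
    show "\<exists>\<delta>>0. \<forall>x. is_solution (hiv_field \<Lambda> \<mu> \<beta> \<rho> \<phi> \<alpha> \<omega> \<eta>C \<eta>A) x \<and>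
        x 0 \<in> Omega \<Lambda> \<mu> - Omega0 \<Lambda> \<mu> \<and> dist (x 0) (Se, Ie, Ce, Ae) < \<delta> \<longrightarrow>
        (\<forall>t\<ge>0. dist (x t) (Se, Ie, Ce, Ae) < e)"
      using \<delta>(1) \<delta>(2)[OF sol, of _ 0] by blast
  next
    fix x
    assume "is_solution (hiv_field \<Lambda> \<mu> \<beta> \<rho> \<phi> \<alpha> \<omega> \<eta>C \<eta>A) x \<and> x 0 \<in> Omega \<Lambda> \<mu> - Omega0 \<Lambda> \<mu>"
    then have x: "hiv_solution \<Lambda> \<mu> \<beta> \<rho> \<phi> \<alpha> \<omega> \<eta>C \<eta>A x" by (rule sol)
    show "(x \<longlongrightarrow> (Se, Ie, Ce, Ae)) at_top"
    proof (rule tendstoI)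
      fix e :: real assume "0 < e"
      then obtain \<delta> where \<delta>: "0 < \<delta>"
        "\<And>t0 t. 0 \<le> t0 \<Longrightarrow> t0 \<le> t \<Longrightarrow> dist (x t0) (Se, Ie, Ce, Ae) < \<delta> \<Longrightarrow> dist (x t) (Se, Ie, Ce, Ae) < e"
        using lyapunov_stable[of e] x by metis
      obtain T where T: "1 \<le> T" "dist (x T) (Se, Ie, Ce, Ae) < \<delta>"
        using hiv_solution.approaches_endemic[OF x \<delta>(1)] by blast
      show "\<forall>\<^sub>F t in at_top. dist (x t) (Se, Ie, Ce, Ae) < e"
        unfolding eventually_at_top_linorder using \<delta>(2)[OF _ _ T(2)] T(1) by (intro exI[of _ T]) auto
    qed
  qed
qed

end

theorem mainTheorem1:
  fixes \<Lambda> \<mu> \<beta> \<rho> \<phi> \<alpha> \<omega> \<eta>C \<eta>A :: real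
  assumes "\<Lambda> > 0" "\<mu> > 0" "\<beta> > 0" "\<rho> > 0" "\<phi> > 0" "\<alpha> > 0" "\<omega> > 0"
    and "0 < \<eta>C" "\<eta>C \<le> 1" "\<eta>A \<ge> 1"
    and "R0t \<Lambda> \<mu> \<beta> \<rho> \<phi> \<alpha> \<omega> \<eta>C \<eta>A > 1"
  shows "globally_asymptotically_stable (hiv_field \<Lambda> \<mu> \<beta> \<rho> \<phi> \<alpha> \<omega> \<eta>C \<eta>A)
           (endemic_eq \<Lambda> \<mu> \<beta> \<rho> \<phi> \<alpha> \<omega> \<eta>C \<eta>A) (Omega \<Lambda> \<mu> - Omega0 \<Lambda> \<mu>)"
proof -
  interpret hiv_model \<Lambda> \<mu> \<beta> \<rho> \<phi> \<alpha> \<omega> \<eta>C \<eta>A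
    using assms by unfold_locales auto
  show ?thesis by (rule globally_asymptotically_stable)
qed

end
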